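(* Let $S(\mathbf{G},\mathbf{\Sigma})$ be a constrained switching system with $\mathbf{\Sigma}\subset\mathbb{R}^{n\times n}$, let $r>0$, and let $T=\lceil \log(n)/(2\log(1+r))\rceil$. Then the value $\gamma_*(S^T)$ of the $T$-product lift satisfies $$\hat\rho(S)\le\gamma_*(S^T)^{1/T}\le(1+r)\,\hat\rho(S).$$
   Context: An automaton $\mathbf{G}(V,E)$ is a strongly connected directed graph with finite node set $V$ and finite edge set $E$ of labelled edges $(v,w,\sigma)$, $\sigma$ indexing a matrix $A_\sigma\in\mathbf{\Sigma}$. A label sequence is accepted by $\mathbf{G}$ if it is the succession of labels along some path of $\mathbf{G}$ (no prescribed initial/final node). The constrained switching system $S(\mathbf{G},\mathbf{\Sigma})$ is $x_{t+1}=A_{\sigma(t)}x_t$ with accepted switching sequences; its CJSR is $\hat\rho(S)=\lim_{t\to\infty}\max\{\|A_{\sigma(t-1)}\cdots A_{\sigma(0)}\|^{1/t} : \sigma(0),\dots,\sigma(t-1)\text{ accepted}\}$. The $T$-product lift $S^T$ is the constrained switching system on the automaton with the same nodes $V$ and one edge $(v,w,\{\sigma(1)\dots\sigma(T)\})$ per path of length $T$ in $\mathbf{G}$ from $v$ to $w$ with labels $\sigma(1),\dots,\sigma(T)$, the matrix of that label being $A_{\sigma(T)}\cdots A_{\sigma(1)}$. For a constrained switching system $S'$ on automaton $(V',E')$, $\gamma_*(S')$ is the infimum of $\gamma$ such that there exist symmetric $Q_v\succ0$ ($v\in V'$) with $\gamma^2Q_v-A_\sigma^\top Q_wA_\sigma\succeq0$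 for all $(v,w,\sigma)\in E'$. *)

theory Defs
  imports "HOL-Analysis.Analysis"
begin

definition path_in :: "('v \<times> 'v \<times> 'l) set \<Rightarrow> 'v list \<Rightarrow> 'l list \<Rightarrow> bool" where
  "path_in E vs ls \<longleftrightarrow> length vs = Suc (length ls) \<and>
     (\<forall>i < length ls. (vs ! i, vs ! Suc i, ls ! i) \<in> E)"

text \<open>Label sequences accepted by the automaton (no prescribed initial/final node).\<close>
definition accepted :: "('v \<times> 'v \<times> 'l) set \<Rightarrow> 'l list \<Rightarrow> bool" where
  "accepted E ls \<longleftrightarrow> (\<exists>vs. path_in E vs ls)"

definition automaton :: "'v set \<Rightarrow> ('v \<times> 'v \<times> 'l) set \<Rightarrow> bool" where
  "automaton V E \<longleftrightarrow> finite V \<and> finite E \<and> V \<noteq> {} \<and>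
     (\<forall>(v, w, l) \<in> E. v \<in> V \<and> w \<in> V) \<and>
     (\<forall>v \<in> V. \<forall>w \<in> V. \<exists>vs ls. path_in E vs ls \<and> hd vs = v \<and> last vs = w)"

text \<open>Product A_{l(t-1)} ... A_{l(0)} of the matrices along a label sequence.\<close>
definition prodmat :: "('l \<Rightarrow> real^'n^'n) \<Rightarrow> 'l list \<Rightarrow> real^'n^'n" where
  "prodmat A ls = fold (\<lambda>l M. A l ** M) ls (mat 1)"

definition matnorm :: "real^'n^'n \<Rightarrow> real" where
  "matnorm M = onorm (\<lambda>x. M *v x)"

definition cjsr :: "('v \<times> 'v \<times> 'l) set \<Rightarrow> ('l \<Rightarrow> real^'n^'n) \<Rightarrow> real" where
  "cjsr E A = lim (\<lambda>t. Max ((\<lambda>ls. root t (matnorm (prodmat A ls))) `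
                          {ls. length ls = t \<and> accepted E ls}))"

text \<open>T-product lift: same nodes, one edge per path of length T, labelled by its label word.\<close>
definition lift_edges :: "('v \<times> 'v \<times> 'l) set \<Rightarrow> nat \<Rightarrow> ('v \<times> 'v \<times> 'l list) set" where
  "lift_edges E T = {(v, w, ls). length ls = T \<and>
      (\<exists>vs. path_in E vs ls \<and> hd vs = v \<and> last vs = w)}"

definition psd :: "real^'n^'n \<Rightarrow> bool" where
  "psd M \<longleftrightarrow> (\<forall>x. x \<bullet> (M *v x) \<ge> 0)"

definition pd :: "real^'n^'n \<Rightarrow> bool" where
  "pd M \<longleftrightarrow> (\<forall>x. x \<noteq> 0 \<longrightarrow> x \<bullet> (M *v x) > 0)"

definition gamma_star :: "'v set \<Rightarrow> ('v \<times> 'v \<times> 'l) set \<Rightarrow> ('l \<Rightarrow> real^'n^'n) \<Rightarrow> real" where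
  "gamma_star V E A = Inf {\<gamma>. \<gamma> \<ge> 0 \<and> (\<exists>Q :: 'v \<Rightarrow> real^'n^'n.
      (\<forall>v \<in> V. transpose (Q v) = Q v \<and> pd (Q v)) \<and>
      (\<forall>(v, w, l) \<in> E. psd (\<gamma>\<^sup>2 *\<^sub>R Q v - transpose (A l) ** Q w ** A l)))}"

end

theory Submission
  imports Defs
begin

text \<open>Lower bound: a multiple quadratic Lyapunov function with rate \<open>\<gamma>\<close> for the \<open>T\<close>-lift bounds
  every accepted product of length \<open>kT\<close> by a constant times \<open>\<gamma>\<^sup>k\<close>, so the CJSR is at most
  \<open>\<gamma>\<^bsup>1/T\<^esup>\<close>.  Upper bound: for \<open>\<mu>\<close> above the \<open>T\<close>-th power of the CJSR, the suprema of the
  products of the lift leaving a node \<open>v\<close>, scaled by \<open>\<mu>\<close> per lifted step, are norms \<open>N\<^sub>v\<close> (finite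
  by Fekete's lemma) that contract by \<open>\<mu>\<close> along lifted edges; John's ellipsoid theorem
  approximates each \<open>N\<^sub>v\<close> by a quadratic norm up to the factor \<open>\<surd>n\<close>, so \<open>\<surd>n \<mu>\<close> is a feasible
  rate.  The choice of \<open>T\<close> makes \<open>n\<^bsup>1/(2T)\<^esup> \<le> 1 + r\<close>.\<close>

section \<open>Quadratic forms and rank-one determinants\<close>

definition quad_form :: "real^'n^'n \<Rightarrow> real^'n \<Rightarrow> real" where
  "quad_form P x = x \<bullet> (P *v x)"

definition outer :: "real^'n \<Rightarrow> real^'n \<Rightarrow> real^'n^'n" where
  "outer a b = (\<chi> i j. a$i * b$j)"

lemma psd_iff_quad_form: "psd P \<longleftrightarrow> (\<forall>x. 0 \<le> quad_form P x)"
  by (simp add: psd_def quad_form_def)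

lemma pd_iff_quad_form: "pd P \<longleftrightarrow> (\<forall>x. x \<noteq> 0 \<longrightarrow> 0 < quad_form P x)"
  by (simp add: pd_def quad_form_def)

lemma quad_form_eq_sum: "quad_form P x = (\<Sum>i\<in>UNIV. \<Sum>j\<in>UNIV. x$i * P$i$j * x$j)"
  by (simp add: quad_form_def inner_vec_def matrix_vector_mult_def sum_distrib_left mult.assoc)

lemma continuous_on_quad_form_matrix: "continuous_on S (\<lambda>P. quad_form P x)"
  unfolding quad_form_eq_sum by (intro continuous_intros)

lemma continuous_on_quad_form: "continuous_on S (quad_form P)"
  unfolding quad_form_eq_sum by (intro continuous_intros)

lemma quad_form_zero [simp]: "quad_form P 0 = 0"
  by (simp add: quad_form_def)

lemma quad_form_scaleR: "quad_form P (c *\<^sub>R x) = c\<^sup>2 * quad_form P x"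
  by (simp add: quad_form_def matrix_vector_mult_scaleR power2_eq_square)

lemma quad_form_combination:
  "quad_form (c *\<^sub>R P + d *\<^sub>R Q) x = c * quad_form P x + d * quad_form Q x"
  by (simp add: quad_form_def matrix_vector_mult_add_rdistrib
      scaleR_matrix_vector_assoc[symmetric] inner_add_right)

lemma quad_form_id: "quad_form (mat 1) x = (norm x)\<^sup>2"
  by (simp add: quad_form_def power2_norm_eq_inner)

lemma outer_mult_vector: "outer a b *v x = (b \<bullet> x) *\<^sub>R a"
  by (simp add: vec_eq_iff outer_def matrix_vector_mult_def inner_vec_def sum_distrib_left mult_ac)

lemma quad_form_outer: "quad_form (outer a a) x = (a \<bullet> x)\<^sup>2"
  by (simp add: quad_form_def outer_mult_vector power2_eq_square inner_commute)

lemma transpose_outer_self: "transpose (outer a a) = outer a a"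
  by (simp add: vec_eq_iff outer_def transpose_def mult.commute)

lemma matrix_mult_outer: "P ** outer a b = outer (P *v a) b"
  by (simp add: vec_eq_iff outer_def matrix_matrix_mult_def matrix_vector_mult_def
      sum_distrib_left mult_ac)

lemma quad_form_congruence: "quad_form (transpose M ** Q ** M) x = quad_form Q (M *v x)"
proof -
  have "x \<bullet> ((transpose M ** Q ** M) *v x) = x \<bullet> (transpose M *v (Q *v (M *v x)))"
    by (simp add: matrix_vector_mul_assoc matrix_mul_assoc)
  also have "\<dots> = (M *v x) \<bullet> (Q *v (M *v x))"
    using dot_lmul_matrix[of "Q *v (M *v x)" M x] by (simp add: inner_commute)
  finally show ?thesis by (simp add: quad_form_def)
qed

lemma psd_diff_congruence_iff:
  "psd (c *\<^sub>R P - transpose M ** Q ** M) \<longleftrightarrow> (\<forall>x. quad_form Q (M *v x) \<le> c * quad_form P x)"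
proof -
  have "quad_form (c *\<^sub>R P - transpose M ** Q ** M) x = c * quad_form P x - quad_form Q (M *v x)" for x
    using quad_form_combination[of c P "-1" "transpose M ** Q ** M" x]
    by (simp add: quad_form_congruence)
  then show ?thesis by (simp add: psd_iff_quad_form)
qed

lemma symmetric_inner_swap:
  fixes P :: "real^'n^'n"
  assumes "transpose P = P"
  shows "y \<bullet> (P *v x) = x \<bullet> (P *v y)"
proof -
  have "y \<bullet> (P *v x) = (y v* P) \<bullet> x" by (simp add: dot_lmul_matrix)
  also have "y v* P = P *v y" using vector_transpose_matrix[of y P] assms by simp
  finally show ?thesis by (simp add: inner_commute)
qed

lemma quad_form_add:
  assumes "transpose P = P"
  shows "quad_form P (x + y) = quad_form P x + 2 * (x \<bullet> (P *v y)) + quad_form P y"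
  using symmetric_inner_swap[OF assms, of y x]
  by (simp add: quad_form_def matrix_vector_right_distrib inner_add_left inner_add_right)

text \<open>A nonnegative quadratic polynomial in \<open>t\<close> has nonpositive discriminant.\<close>
lemma psd_Cauchy_Schwarz:
  assumes sym: "transpose P = P" and "psd P"
  shows "(x \<bullet> (P *v y))\<^sup>2 \<le> quad_form P x * quad_form P y"
proof -
  let ?b = "x \<bullet> (P *v y)"
  have nonneg: "0 \<le> quad_form P x + 2 * t * ?b + t\<^sup>2 * quad_form P y" for t
  proof -
    have "0 \<le> quad_form P (x + t *\<^sub>R y)" using \<open>psd P\<close> by (simp add: psd_iff_quad_form)
    then show ?thesis
      by (simp add: quad_form_add[OF sym] quad_form_scaleR matrix_vector_mult_scaleR mult.assoc)
  qed
  have qy: "0 \<le> quad_form P y"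
    using \<open>psd P\<close> by (simp add: psd_iff_quad_form)
  show ?thesis
  proof (cases "quad_form P y = 0")
    case True
    have "?b = 0"
    proof (rule ccontr)
      assume "?b \<noteq> 0"
      then show False
        using nonneg[of "- (quad_form P x + 1) / (2 * ?b)"] True by (simp add: field_simps)
    qed
    then show ?thesis using True by simp
  next
    case False
    with qy have pos: "0 < quad_form P y" by simp
    have "0 \<le> quad_form P x - ?b\<^sup>2 / quad_form P y"
      using nonneg[of "- ?b / quad_form P y"] pos by (simp add: field_simps power2_eq_square)
    then show ?thesis using pos by (simp add: field_simps mult.commute)
  qed
qed

lemma pd_quad_form_lower_bound:
  assumes "pd P"
  obtains a where "a > 0" "\<And>x. a * (norm x)\<^sup>2 \<le> quad_form P x"
proof -
  have "sphere (0::real^'n) 1 \<noteq> {}"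
    using norm_axis_1[of undefined] by (auto simp: sphere_def intro!: exI[of _ "axis undefined 1"])
  then obtain x0 where x0: "x0 \<in> sphere 0 1" and min: "\<And>y. y \<in> sphere 0 1 \<Longrightarrow> quad_form P x0 \<le> quad_form P y"
    using continuous_attains_inf[OF compact_sphere _ continuous_on_quad_form] by blast
  have "x0 \<noteq> 0" using x0 by auto
  then have pos: "quad_form P x0 > 0"
    using assms by (simp add: pd_iff_quad_form)
  have "quad_form P x0 * (norm x)\<^sup>2 \<le> quad_form P x" for x
  proof (cases "x = 0")
    case False
    have "quad_form P x0 \<le> quad_form P ((1 / norm x) *\<^sub>R x)"
      using False by (intro min) simp
    also have "\<dots> = quad_form P x / (norm x)\<^sup>2"
      by (simp add: quad_form_scaleR power_divide)
    finally show ?thesis using False by (simp add: le_divide_eq)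
  qed simp
  with pos that show ?thesis by blast
qed

lemma symmetric_psd_invertible_imp_pd:
  fixes P :: "real^'n^'n"
  assumes sym: "transpose P = P" and "psd P" and "invertible P"
  shows "pd P"
  unfolding pd_iff_quad_form
proof (intro allI impI)
  fix x :: "real^'n" assume "x \<noteq> 0"
  obtain P' where "P' ** P = mat 1" using \<open>invertible P\<close> by (auto simp: invertible_def)
  then have "P' *v (P *v x) = x" by (simp add: matrix_vector_mul_assoc)
  then have "P *v x \<noteq> 0" using \<open>x \<noteq> 0\<close> by auto
  then have "0 < ((P *v x) \<bullet> (P *v x))\<^sup>2" by simp
  also have "\<dots> \<le> quad_form P (P *v x) * quad_form P x"
    by (rule psd_Cauchy_Schwarz[OF sym \<open>psd P\<close>])
  finally have "quad_form P x \<noteq> 0" by auto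
  moreover have "0 \<le> quad_form P x" using \<open>psd P\<close> by (simp add: psd_iff_quad_form)
  ultimately show "0 < quad_form P x" by simp
qed

lemma quad_form_le_matnorm: "quad_form P x \<le> matnorm P * (norm x)\<^sup>2"
proof -
  have "quad_form P x \<le> norm x * norm (P *v x)"
    unfolding quad_form_def by (rule norm_cauchy_schwarz)
  also have "\<dots> \<le> norm x * (matnorm P * norm x)"
    unfolding matnorm_def by (intro mult_left_mono onorm) simp_all
  finally show ?thesis by (simp add: power2_eq_square mult_ac)
qed

lemma det_scaleR: "det (c *\<^sub>R A) = c ^ CARD('n) * det (A :: real^'n^'n)"
proof -
  have "c *\<^sub>R A = (\<chi> i. c *s A $ i)" by (simp add: vec_eq_iff)
  then show ?thesis using det_rows_mul[of "\<lambda>_. c" "\<lambda>i. A $ i"] by simp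
qed

lemma row_mat_1: "row i (mat 1 :: real^'n^'n) = axis i 1"
  by (simp add: vec_eq_iff row_def mat_def axis_def)

lemma det_identity_replace_row: "det (\<chi> i. if i = k then b else axis i 1 :: real^'n^'n) = b$k"
proof -
  have "(\<Sum>i\<in>UNIV. b$i *s row i (mat 1 :: real^'n^'n)) = b"
    by (simp add: vec_eq_iff row_def mat_def if_distrib cong: if_cong)
  then show ?thesis
    using cramer_lemma_transpose[of k b "mat 1 :: real^'n^'n"] by (simp only: row_mat_1) simp
qed

lemma det_identity_replace_row_add_multiples:
  fixes a b :: "real^'n"
  assumes "finite T" "k \<notin> T"
  shows "det (\<chi> i. if i = k then b else if i \<in> T then axis i 1 + a$i *s b else axis i 1 :: real^'n^'n)
       = b$k"
  using assms
proof (induction T rule: finite_induct)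
  case empty
  then show ?case using det_identity_replace_row[of k b] by (simp cong: if_cong)
next
  case (insert j T)
  let ?A = "(\<chi> i. if i = k then b else if i \<in> T then axis i 1 + a$i *s b else axis i 1) :: real^'n^'n"
  have "j \<noteq> k" using insert by auto
  have "(\<chi> i. if i = k then b else if i \<in> insert j T then axis i 1 + a$i *s b else axis i 1)
      = (\<chi> i. if i = j then row j ?A + a$j *s row k ?A else row i ?A)"
    using \<open>j \<noteq> k\<close> insert(2) by (intro Cart_lambda_cong) (auto simp: row_def vec_eq_iff)
  then show ?case
    using det_row_operation[OF \<open>j \<noteq> k\<close>, of ?A "a$j"] insert by simp
qed

lemma det_identity_plus_outer: "det (mat 1 + outer a b) = 1 + a \<bullet> (b :: real^'n)"
proof -
  have main: "finite T \<Longrightarrow> det (\<chi> i. if i \<in> T then axis i 1 + a$i *s b else axis i 1 :: real^'n^'n)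
        = 1 + (\<Sum>i\<in>T. a$i * b$i)" for T
  proof (induction T rule: finite_induct)
    case empty
    have "(\<chi> i. axis i 1) = (mat 1 :: real^'n^'n)"
      by (simp add: vec_eq_iff mat_def axis_def)
    then show ?case by simp
  next
    case (insert k T)
    let ?c = "\<lambda>i. if i \<in> T then axis i 1 + a$i *s b else axis i (1::real)"
    have split: "(\<chi> i. if i \<in> insert k T then axis i 1 + a$i *s b else axis i 1 :: real^'n^'n)
       = (\<chi> i. if i = k then axis i 1 + a$k *s b else ?c i)"
      by (intro Cart_lambda_cong) auto
    have "(\<chi> i. if i = k then axis i 1 else ?c i) = (\<chi> i. ?c i)"
      using insert by (intro Cart_lambda_cong) auto
    moreover have "det (\<chi> i. if i = k then b else ?c i) = b$k"
      using det_identity_replace_row_add_multiples[OF insert(1,2), of b a] by simp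
    moreover have "(\<chi> i. if i = k then axis i 1 else ?c i) = (\<chi> i. if i = k then axis k 1 else ?c i)"
      by (intro Cart_lambda_cong) auto
    ultimately show ?case
      unfolding split det_row_add[of k] det_row_mul[of k] using insert by (simp add: algebra_simps)
  qed
  have "mat 1 + outer a b = (\<chi> i. if i \<in> UNIV then axis i 1 + a$i *s b else axis i 1)"
    by (simp add: vec_eq_iff mat_def axis_def outer_def)
  then show ?thesis using main[of UNIV] by (simp add: inner_vec_def)
qed

lemma det_rank_one_update:
  fixes P :: "real^'n^'n"
  assumes inv: "P ** Q = mat 1" and "d < 1"
  shows "det ((1 - d) *\<^sub>R P + d *\<^sub>R outer t t)
       = det P * (1 - d) ^ CARD('n) * (1 + d / (1 - d) * (t \<bullet> (Q *v t)))"
proof -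
  let ?u = "(d / (1 - d)) *\<^sub>R (Q *v t)"
  have "P *v ?u = (d / (1 - d)) *\<^sub>R t"
    by (simp add: matrix_vector_mult_scaleR matrix_vector_mul_assoc inv)
  then have "P ** (mat 1 + outer ?u t) = P + outer ((d / (1 - d)) *\<^sub>R t) t"
    by (simp add: matrix_add_ldistrib matrix_mult_outer)
  also have "outer ((d / (1 - d)) *\<^sub>R t) t = (d / (1 - d)) *\<^sub>R outer t t"
    by (simp add: vec_eq_iff outer_def)
  finally have "(1 - d) *\<^sub>R (P ** (mat 1 + outer ?u t)) = (1 - d) *\<^sub>R P + ((1 - d) * (d / (1 - d))) *\<^sub>R outer t t"
    by (simp add: scaleR_add_right)
  also have "(1 - d) * (d / (1 - d)) = d" using \<open>d < 1\<close> by simp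
  finally have "det ((1 - d) *\<^sub>R P + d *\<^sub>R outer t t) = (1 - d) ^ CARD('n) * (det P * (1 + ?u \<bullet> t))"
    by (metis det_scaleR det_mul det_identity_plus_outer)
  then show ?thesis by (simp add: inner_commute mult_ac)
qed

text \<open>The factor below has derivative \<open>s - N\<close> at \<open>d = 0\<close>; Bernoulli's inequality
  makes the choice of a small \<open>d\<close> explicit.\<close>
lemma rank_one_det_factor_gt_1:
  fixes s :: real and N :: nat
  assumes "N \<ge> 1" and "s > N"
  obtains d where "0 < d" "d < 1" "(1 - d) ^ N * (1 + d / (1 - d) * s) > 1"
proof -
  define n where "n = real N"
  have n: "n \<ge> 1" "s > n" using assms by (auto simp: n_def)
  define d where "d = min (1/2) ((s - n) / (2 * n * s))"
  have d: "0 < d" "d \<le> 1/2" "d \<le> (s - n) / (2 * n * s)"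
    using n by (auto simp: d_def)
  have factor: "(1 - d) ^ N * (1 + d / (1 - d) * s) = (1 - d) ^ (N - 1) * (1 + d * (s - 1))"
  proof -
    have "(1 - d) ^ N = (1 - d) ^ (N - 1) * (1 - d)"
      using \<open>N \<ge> 1\<close> by (metis One_nat_def Suc_pred less_eq_Suc_le power_Suc2)
    moreover have "(1 - d) * (1 + d / (1 - d) * s) = 1 + d * (s - 1)"
      using d by (simp add: field_simps)
    ultimately show ?thesis by (simp only: mult.assoc)
  qed
  have Bernoulli: "1 - (n - 1) * d \<le> (1 - d) ^ (N - 1)"
    using Bernoulli_inequality[of "-d" "N - 1"] d \<open>N \<ge> 1\<close> by (simp add: n_def of_nat_diff)
  have "(n - 1) * (s - 1) * d < s - n"
  proof -
    have "(n - 1) * (s - 1) * d \<le> (n - 1) * (s - 1) * ((s - n) / (2 * n * s))"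
      using d n by (intro mult_left_mono) auto
    also have "\<dots> < (2 * n * s) * ((s - n) / (2 * n * s))"
    proof (rule mult_strict_right_mono)
      have "(n - 1) * (s - 1) \<le> n * s" using n by (intro mult_mono) auto
      moreover have "0 < n * s" using n by simp
      ultimately show "(n - 1) * (s - 1) < 2 * n * s" by linarith
    qed (use n in simp)
    also have "\<dots> = s - n" using n by simp
    finally show ?thesis .
  qed
  then have "0 < d * ((s - n) - (n - 1) * (s - 1) * d)" using d by simp
  also have "\<dots> = (1 - (n - 1) * d) * (1 + d * (s - 1)) - 1" by (simp add: algebra_simps)
  finally have "1 < (1 - (n - 1) * d) * (1 + d * (s - 1))" by simp
  also have "\<dots> \<le> (1 - d) ^ (N - 1) * (1 + d * (s - 1))"
    using Bernoulli n d by (intro mult_right_mono) auto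
  finally show ?thesis using that d factor by simp
qed

lemma det_rank_one_update_increases:
  fixes P :: "real^'n^'n"
  assumes "P ** Q = mat 1" and "det P > 0" and "t \<bullet> (Q *v t) > CARD('n)"
  obtains d where "0 < d" "d < 1" "det P < det ((1 - d) *\<^sub>R P + d *\<^sub>R outer t t)"
proof -
  obtain d where d: "0 < d" "d < 1" and gain: "(1 - d) ^ CARD('n) * (1 + d / (1 - d) * (t \<bullet> (Q *v t))) > 1"
    using rank_one_det_factor_gt_1[of "CARD('n)" "t \<bullet> (Q *v t)"] assms(3) by auto
  have "det P * 1 < det P * ((1 - d) ^ CARD('n) * (1 + d / (1 - d) * (t \<bullet> (Q *v t))))"
    using gain \<open>det P > 0\<close> by (intro mult_strict_left_mono)
  then show ?thesis
    using that[OF d] det_rank_one_update[OF assms(1) \<open>d < 1\<close>] by (simp add: mult.assoc)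
qed

section \<open>John's ellipsoid theorem\<close>

lemma norm_matrix_le_entries:
  fixes P :: "real^'n^'m"
  assumes "\<And>i j. \<bar>P$i$j\<bar> \<le> c"
  shows "norm P \<le> real CARD('m) * (real CARD('n) * c)"
proof -
  have "norm P \<le> (\<Sum>i\<in>UNIV. \<bar>norm (P$i)\<bar>)"
    unfolding norm_vec_def by (rule L2_set_le_sum_abs)
  also have "\<dots> \<le> (\<Sum>i\<in>(UNIV::'m set). real CARD('n) * c)"
  proof (rule sum_mono)
    fix i
    have "norm (P$i) \<le> (\<Sum>j\<in>UNIV. \<bar>P$i$j\<bar>)" by (rule norm_le_l1_cart)
    also have "\<dots> \<le> (\<Sum>j\<in>(UNIV::'n set). c)" using assms by (intro sum_mono) auto
    finally show "\<bar>norm (P$i)\<bar> \<le> real CARD('n) * c" by simp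
  qed
  finally show ?thesis by simp
qed

locale equivalent_norm =
  fixes N :: "real^'n \<Rightarrow> real" and C :: real
  assumes triangle: "N (x + y) \<le> N x + N y"
    and scaleR: "N (c *\<^sub>R x) = \<bar>c\<bar> * N x"
    and norm_le: "norm x \<le> N x"
    and le_norm: "N x \<le> C * norm x"
begin

lemma nonneg: "0 \<le> N x"
  using norm_le[of x] norm_ge_zero[of x] by linarith

lemma zero [simp]: "N 0 = 0"
  using scaleR[of 0 0] by simp

lemma uminus [simp]: "N (- x) = N x"
  using scaleR[of "-1" x] by simp

lemma eq_0_iff: "N x = 0 \<longleftrightarrow> x = 0"
  using norm_le[of x] by auto

lemma C_ge_1: "C \<ge> 1"
proof -
  have "norm (axis undefined (1::real) :: real^'n) \<le> C * norm (axis undefined (1::real) :: real^'n)"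
    using norm_le le_norm order_trans by blast
  then show ?thesis by (simp add: norm_axis_1)
qed

lemma continuous: "continuous_on S N"
proof -
  have "C-lipschitz_on UNIV N"
  proof (rule lipschitz_onI)
    fix x y :: "real^'n"
    have "N x \<le> N (x - y) + N y" "N y \<le> N (x - y) + N x"
      using triangle[of "x - y" y] triangle[of "y - x" x] uminus[of "x - y"] by simp_all
    moreover have "N (x - y) \<le> C * norm (x - y)" by (rule le_norm)
    ultimately show "dist (N x) (N y) \<le> C * dist x y"
      by (simp add: dist_real_def dist_norm abs_le_iff)
  qed (use C_ge_1 in simp)
  then show ?thesis
    by (rule continuous_on_subset[OF lipschitz_on_continuous_on]) simp
qed

lemma convex_unit_ball: "convex {x. N x \<le> 1}"
  unfolding convex_def
proof (intro allI impI ballI CollectI; clarify)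
  fix x w :: "real^'n" and u v :: real
  assume "N x \<le> 1" "N w \<le> 1" "0 \<le> u" "0 \<le> v" "u + v = 1"
  have "N (u *\<^sub>R x + v *\<^sub>R w) \<le> u * N x + v * N w"
    using triangle[of "u *\<^sub>R x" "v *\<^sub>R w"] scaleR[of u x] scaleR[of v w] \<open>0 \<le> u\<close> \<open>0 \<le> v\<close>
    by simp
  also have "\<dots> \<le> u * 1 + v * 1"
    using \<open>N x \<le> 1\<close> \<open>N w \<le> 1\<close> \<open>0 \<le> u\<close> \<open>0 \<le> v\<close> by (intro add_mono mult_left_mono)
  finally show "N (u *\<^sub>R x + v *\<^sub>R w) \<le> 1" using \<open>u + v = 1\<close> by simp
qed

text \<open>Hahn--Banach in finite dimension: a hyperplane supporting the unit ball \<open>{x. N x \<le> 1}\<close>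
  and separating it from \<open>y / \<rho>\<close> yields a functional of dual norm at most \<open>1\<close>.\<close>
lemma norming_functional:
  assumes "0 < \<rho>" "\<rho> < N y"
  obtains t where "\<And>x. \<bar>t \<bullet> x\<bar> \<le> N x" "\<rho> < t \<bullet> y"
proof -
  define B where "B = {x. N x \<le> 1}"
  have "convex B" unfolding B_def by (rule convex_unit_ball)
  moreover have "closed B"
    unfolding B_def by (intro closed_Collect_le continuous continuous_on_const)
  moreover have "0 \<in> B" by (simp add: B_def)
  moreover have "(1 / \<rho>) *\<^sub>R y \<notin> B"
    using assms by (simp add: B_def scaleR field_simps)
  ultimately have "\<exists>a b. \<exists>y0\<in>B. a \<bullet> ((1 / \<rho>) *\<^sub>R y) < b \<and> a \<bullet> y0 = b \<and> (\<forall>x\<in>B. b \<le> a \<bullet> x)"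
    by (intro supporting_hyperplane_closed_point) auto
  then obtain a b where sep: "a \<bullet> ((1 / \<rho>) *\<^sub>R y) < b" and supp: "\<And>x. x \<in> B \<Longrightarrow> b \<le> a \<bullet> x"
    by blast
  have "b < 0"
  proof (rule ccontr)
    assume "\<not> b < 0"
    with supp[OF \<open>0 \<in> B\<close>] have "b = 0" by simp
    with sep have "a \<noteq> 0" by auto
    define x where "x = (1 / (C * norm a)) *\<^sub>R a"
    have "N x \<le> 1" "N (- x) \<le> 1"
      using le_norm[of x] \<open>a \<noteq> 0\<close> C_ge_1 by (simp_all add: x_def)
    then have "0 \<le> a \<bullet> (- x)" using supp[of "- x"] \<open>b = 0\<close> by (simp only: B_def mem_Collect_eq)
    moreover have "0 < a \<bullet> x" using \<open>a \<noteq> 0\<close> C_ge_1 by (simp add: x_def)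
    ultimately show False by simp
  qed
  define t where "t = (1 / b) *\<^sub>R a"
  have le_N: "t \<bullet> x \<le> N x" for x
  proof (cases "x = 0")
    case False
    then have pos: "0 < N x" using nonneg[of x] eq_0_iff[of x] by simp
    have "(1 / N x) *\<^sub>R x \<in> B" using pos by (simp add: B_def scaleR)
    then have "b \<le> a \<bullet> ((1 / N x) *\<^sub>R x)" by (rule supp)
    then show ?thesis using pos \<open>b < 0\<close> by (simp add: t_def field_simps)
  qed simp
  have "\<bar>t \<bullet> x\<bar> \<le> N x" for x
    using le_N[of x] le_N[of "- x"] by simp
  moreover have "\<rho> < t \<bullet> y"
    using sep \<open>b < 0\<close> assms(1) by (simp add: t_def field_simps)
  ultimately show ?thesis using that by blast
qed

definition inscribed_ellipsoids :: "(real^'n^'n) set" where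
  "inscribed_ellipsoids = {P. transpose P = P \<and> psd P \<and> (\<forall>x. quad_form P x \<le> (N x)\<^sup>2)}"

lemma compact_inscribed_ellipsoids: "compact inscribed_ellipsoids"
proof -
  have eq: "inscribed_ellipsoids = {P. (\<forall>i j. P$i$j = P$j$i) \<and> (\<forall>x. 0 \<le> quad_form P x)
                                      \<and> (\<forall>x. quad_form P x \<le> (N x)\<^sup>2)}"
    by (auto simp: inscribed_ellipsoids_def psd_iff_quad_form vec_eq_iff transpose_def)
  have "closed inscribed_ellipsoids"
    unfolding eq
    by (intro closed_Collect_conj closed_Collect_all closed_Collect_eq closed_Collect_le
        continuous_intros continuous_on_quad_form_matrix)
  moreover have "norm P \<le> real CARD('n) * (real CARD('n) * C\<^sup>2)" if "P \<in> inscribed_ellipsoids" for P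
  proof (rule norm_matrix_le_entries)
    fix i j
    have sym: "transpose P = P" and "psd P" and inside: "\<And>x. quad_form P x \<le> (N x)\<^sup>2"
      using that by (auto simp: inscribed_ellipsoids_def)
    have diag: "quad_form P (axis k 1) \<le> C\<^sup>2" for k
    proof -
      have "quad_form P (axis k 1) \<le> (N (axis k 1))\<^sup>2" by (rule inside)
      also have "\<dots> \<le> C\<^sup>2"
        using le_norm[of "axis k 1"] nonneg[of "axis k 1"] by (simp add: norm_axis_1 power_mono)
      finally show ?thesis .
    qed
    have "(P$i$j)\<^sup>2 \<le> quad_form P (axis i 1) * quad_form P (axis j 1)"
      using psd_Cauchy_Schwarz[OF sym \<open>psd P\<close>, of "axis i 1" "axis j 1"]
      by (simp add: matrix_vector_mult_basis inner_axis' column_def)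
    also have "\<dots> \<le> C\<^sup>2 * C\<^sup>2"
      using diag[of i] diag[of j] \<open>psd P\<close> by (intro mult_mono) (auto simp: psd_iff_quad_form)
    finally have "(P$i$j)\<^sup>2 \<le> (C\<^sup>2)\<^sup>2" by (simp add: power2_eq_square)
    then show "\<bar>P$i$j\<bar> \<le> C\<^sup>2"
      using power2_le_imp_le[of "\<bar>P$i$j\<bar>" "C\<^sup>2"] by simp
  qed
  then have "bounded inscribed_ellipsoids" unfolding bounded_iff by blast
  ultimately show ?thesis by (simp add: compact_eq_bounded_closed)
qed

lemma mat_1_inscribed: "mat 1 \<in> inscribed_ellipsoids"
  using norm_le by (auto simp: inscribed_ellipsoids_def psd_iff_quad_form quad_form_id intro!: power_mono)

lemma inscribed_ellipsoids_average_outer: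
  assumes "P \<in> inscribed_ellipsoids" and "0 \<le> d" "d \<le> 1" and dual: "\<And>x. \<bar>t \<bullet> x\<bar> \<le> N x"
  shows "(1 - d) *\<^sub>R P + d *\<^sub>R outer t t \<in> inscribed_ellipsoids"
proof -
  have sym: "transpose P = P" and "psd P" and inside: "\<And>x. quad_form P x \<le> (N x)\<^sup>2"
    using assms(1) by (auto simp: inscribed_ellipsoids_def)
  have quad_form: "quad_form ((1 - d) *\<^sub>R P + d *\<^sub>R outer t t) x = (1 - d) * quad_form P x + d * (t \<bullet> x)\<^sup>2" for x
    by (simp add: quad_form_combination quad_form_outer)
  have "transpose ((1 - d) *\<^sub>R P + d *\<^sub>R outer t t) = (1 - d) *\<^sub>R P + d *\<^sub>R outer t t"
    using sym transpose_outer_self[of t] by (simp add: transpose_def vec_eq_iff)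
  moreover have "psd ((1 - d) *\<^sub>R P + d *\<^sub>R outer t t)"
    unfolding psd_iff_quad_form quad_form
    using \<open>psd P\<close> assms(2,3) by (intro allI add_nonneg_nonneg mult_nonneg_nonneg) (auto simp: psd_iff_quad_form)
  moreover have "quad_form ((1 - d) *\<^sub>R P + d *\<^sub>R outer t t) x \<le> (N x)\<^sup>2" for x
  proof -
    have "(t \<bullet> x)\<^sup>2 \<le> (N x)\<^sup>2"
      using power_mono[OF dual[of x] abs_ge_zero, of 2] by simp
    then have "(1 - d) * quad_form P x + d * (t \<bullet> x)\<^sup>2 \<le> (1 - d) * (N x)\<^sup>2 + d * (N x)\<^sup>2"
      using inside[of x] assms(2,3) by (intro add_mono mult_left_mono) auto
    then show ?thesis unfolding quad_form by (simp add: algebra_simps)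
  qed
  ultimately show ?thesis by (simp add: inscribed_ellipsoids_def)
qed

lemma max_det_inscribed_ellipsoid:
  obtains P where "P \<in> inscribed_ellipsoids" "det P \<ge> 1"
    "\<And>Q. Q \<in> inscribed_ellipsoids \<Longrightarrow> det Q \<le> det P"
proof -
  have "continuous_on inscribed_ellipsoids (det :: real^'n^'n \<Rightarrow> real)"
    unfolding det_def by (intro continuous_intros)
  then obtain P where "P \<in> inscribed_ellipsoids" and max: "\<And>Q. Q \<in> inscribed_ellipsoids \<Longrightarrow> det Q \<le> det P"
    using continuous_attains_sup[OF compact_inscribed_ellipsoids] mat_1_inscribed by blast
  moreover have "det P \<ge> 1" using max[OF mat_1_inscribed] by simp
  ultimately show ?thesis using that max by blast
qed

text \<open>If the inscribed ellipsoid of maximal volume missed a point \<open>y\<close> of the \<open>\<surd>n\<close>-dilated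
  unit ball, averaging it with the degenerate ellipsoid of a norming functional of \<open>y\<close>
  would increase the volume.\<close>
theorem john_ellipsoid:
  "\<exists>P. transpose P = P \<and> pd P \<and> (\<forall>x. quad_form P x \<le> (N x)\<^sup>2)
      \<and> (\<forall>x. (N x)\<^sup>2 \<le> CARD('n) * quad_form P x)"
proof -
  obtain P where "P \<in> inscribed_ellipsoids" and "det P \<ge> 1"
    and maximal: "\<And>Q. Q \<in> inscribed_ellipsoids \<Longrightarrow> det Q \<le> det P"
    using max_det_inscribed_ellipsoid by blast
  then have sym: "transpose P = P" and "psd P" and inside: "\<And>x. quad_form P x \<le> (N x)\<^sup>2"
    by (auto simp: inscribed_ellipsoids_def)
  have "invertible P" using \<open>det P \<ge> 1\<close> by (simp add: invertible_det_nz)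
  then obtain P' where inv: "P ** P' = mat 1" unfolding invertible_def by blast
  have "(N y)\<^sup>2 \<le> CARD('n) * quad_form P y" for y
  proof (rule ccontr)
    define s where "s = sqrt (CARD('n) * quad_form P y)"
    have "0 \<le> quad_form P y" using \<open>psd P\<close> by (simp add: psd_iff_quad_form)
    then have "0 \<le> s" "s\<^sup>2 = CARD('n) * quad_form P y" by (simp_all add: s_def)
    assume "\<not> ?thesis"
    then have "s < N y"
      using nonneg[of y] \<open>0 \<le> quad_form P y\<close> by (simp add: s_def real_less_lsqrt)
    then obtain t where dual: "\<And>x. \<bar>t \<bullet> x\<bar> \<le> N x" and "(s + N y) / 2 < t \<bullet> y"
      using norming_functional[of "(s + N y) / 2" y] \<open>0 \<le> s\<close> by auto
    then have "s < t \<bullet> y" using \<open>s < N y\<close> by simp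
    then have "CARD('n) * quad_form P y < (t \<bullet> y)\<^sup>2"
      using \<open>0 \<le> s\<close> \<open>s\<^sup>2 = _\<close> power_strict_mono[of s "t \<bullet> y" 2] by simp
    also have "t \<bullet> y = (P' *v t) \<bullet> (P *v y)"
      using symmetric_inner_swap[OF sym, of "P' *v t" y] by (simp add: matrix_vector_mul_assoc inv inner_commute)
    also have "\<dots>\<^sup>2 \<le> (t \<bullet> (P' *v t)) * quad_form P y"
      using psd_Cauchy_Schwarz[OF sym \<open>psd P\<close>, of "P' *v t" y]
      by (simp add: quad_form_def matrix_vector_mul_assoc inv inner_commute)
    finally have "t \<bullet> (P' *v t) > CARD('n)"
      using \<open>0 \<le> quad_form P y\<close> by (rule mult_right_less_imp_less)
    then obtain d where d: "0 < d" "d < 1" and gain: "det P < det ((1 - d) *\<^sub>R P + d *\<^sub>R outer t t)"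
      using det_rank_one_update_increases[OF inv] \<open>det P \<ge> 1\<close> by auto
    have "(1 - d) *\<^sub>R P + d *\<^sub>R outer t t \<in> inscribed_ellipsoids"
      using inscribed_ellipsoids_average_outer[OF \<open>P \<in> inscribed_ellipsoids\<close>] dual d by simp
    from maximal[OF this] gain show False by simp
  qed
  then show ?thesis
    using sym inside symmetric_psd_invertible_imp_pd[OF sym \<open>psd P\<close> \<open>invertible P\<close>] by blast
qed

end

section \<open>Paths and matrix products\<close>

lemma path_in_Nil_iff: "path_in E vs [] \<longleftrightarrow> (\<exists>v. vs = [v])"
  by (auto simp: path_in_def length_Suc_conv)

lemma path_in_Cons_iff:
  "path_in E (v # vs) (l # ls) \<longleftrightarrow> vs \<noteq> [] \<and> (v, hd vs, l) \<in> E \<and> path_in E vs ls"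
proof -
  have all_less_Suc: "(\<forall>i < Suc n. P i) \<longleftrightarrow> P 0 \<and> (\<forall>i < n. P (Suc i))" for P n
    by (auto simp: less_Suc_eq_0_disj)
  show ?thesis
    by (cases vs) (auto simp: path_in_def all_less_Suc)
qed

lemma path_in_nonempty: "path_in E vs ls \<Longrightarrow> vs \<noteq> []"
  by (auto simp: path_in_def)

lemma path_in_append:
  assumes "path_in E vs ls" "path_in E ws ms" "last vs = hd ws"
  shows "path_in E (vs @ tl ws) (ls @ ms)"
  using assms
proof (induction ls arbitrary: vs)
  case Nil
  then obtain v where "vs = [v]" by (auto simp: path_in_Nil_iff)
  with Nil.prems path_in_nonempty[OF Nil.prems(2)] show ?case by simp
next
  case (Cons l ls)
  then obtain v vs' where vs: "vs = v # vs'" by (cases vs) (auto simp: path_in_def)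
  with Cons.prems have "vs' \<noteq> []" "(v, hd vs', l) \<in> E" "path_in E vs' ls" "last vs' = hd ws"
    by (auto simp: path_in_Cons_iff)
  with Cons.IH[of vs'] Cons.prems(2) show ?case by (simp add: vs path_in_Cons_iff)
qed

lemma path_in_take:
  assumes "path_in E vs ls" "k \<le> length ls"
  shows "path_in E (take (Suc k) vs) (take k ls)"
  using assms by (auto simp: path_in_def min_def)

lemma path_in_drop:
  assumes "path_in E vs ls" "k \<le> length ls"
  shows "path_in E (drop k vs) (drop k ls)"
  unfolding path_in_def
proof (intro conjI allI impI)
  show "length (drop k vs) = Suc (length (drop k ls))" using assms by (auto simp: path_in_def)
  fix i assume "i < length (drop k ls)"
  then have "k + i < length ls" by simp
  then show "(drop k vs ! i, drop k vs ! Suc i, drop k ls ! i) \<in> E"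
    using assms by (auto simp: path_in_def)
qed

lemma last_take_path_in:
  assumes "path_in E vs ls" "k \<le> length ls"
  shows "last (take (Suc k) vs) = hd (drop k vs)"
proof -
  have "k < length vs" using assms by (simp add: path_in_def)
  then show ?thesis by (simp add: take_Suc_conv_app_nth hd_drop_conv_nth)
qed

lemma path_in_subset_nodes:
  assumes "automaton V E" "path_in E vs ls" "ls \<noteq> []"
  shows "set vs \<subseteq> V"
  using assms(2,3)
proof (induction ls arbitrary: vs)
  case (Cons l ls)
  then obtain v vs' where vs: "vs = v # vs'" by (cases vs) (auto simp: path_in_def)
  with Cons.prems have "vs' \<noteq> []" "(v, hd vs', l) \<in> E" "path_in E vs' ls"
    by (auto simp: path_in_Cons_iff)
  moreover have "\<And>v w l. (v, w, l) \<in> E \<Longrightarrow> v \<in> V \<and> w \<in> V"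
    using assms(1) by (auto simp: automaton_def)
  ultimately have "v \<in> V" "hd vs' \<in> V" by blast+
  moreover have "set vs' \<subseteq> V"
  proof (cases "ls = []")
    case True
    then show ?thesis using \<open>path_in E vs' ls\<close> \<open>hd vs' \<in> V\<close> by (auto simp: path_in_Nil_iff)
  qed (use Cons.IH \<open>path_in E vs' ls\<close> in blast)
  ultimately show ?case by (simp add: vs)
qed simp

lemma accepted_appendD:
  assumes "accepted E (ls @ ms)"
  shows "accepted E ls" "accepted E ms"
  using assms path_in_take[of E _ "ls @ ms" "length ls"] path_in_drop[of E _ "ls @ ms" "length ls"]
  by (auto simp: accepted_def)

lemma finite_accepted_words:
  assumes "automaton V E"
  shows "finite {ls. length ls = t \<and> accepted E ls}"
proof (rule finite_subset)
  let ?L = "(\<lambda>(v, w, l). l) ` E"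
  show "{ls. length ls = t \<and> accepted E ls} \<subseteq> {ls. set ls \<subseteq> ?L \<and> length ls = t}"
    by (force simp: accepted_def path_in_def in_set_conv_nth image_iff)
  show "finite {ls. set ls \<subseteq> ?L \<and> length ls = t}"
    using assms by (intro finite_lists_length_eq) (auto simp: automaton_def)
qed

lemma automaton_out_edge:
  assumes aut: "automaton V E" and "E \<noteq> {}" and "v \<in> V"
  obtains w l where "(v, w, l) \<in> E" "w \<in> V"
proof -
  obtain a b l where ab: "(a, b, l) \<in> E" using \<open>E \<noteq> {}\<close> by auto
  have EV: "\<And>v w l. (v, w, l) \<in> E \<Longrightarrow> v \<in> V \<and> w \<in> V"
    using aut by (auto simp: automaton_def)
  obtain vs ls where p: "path_in E vs ls" "hd vs = v" "last vs = a"
    using aut \<open>v \<in> V\<close> EV[OF ab] unfolding automaton_def by blast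
  show ?thesis
  proof (cases ls)
    case Nil
    then show ?thesis using p ab EV that by (auto simp: path_in_Nil_iff)
  next
    case (Cons l' ls')
    then obtain vs' where "vs = v # vs'" "(v, hd vs', l') \<in> E"
      using p path_in_nonempty[OF p(1)] by (cases vs) (auto simp: path_in_Cons_iff)
    then show ?thesis using EV that by blast
  qed
qed

lemma exists_path_from:
  assumes "automaton V E" "E \<noteq> {}" "v \<in> V"
  shows "\<exists>vs ls. path_in E vs ls \<and> hd vs = v \<and> length ls = t"
  using assms(3)
proof (induction t arbitrary: v)
  case 0
  then show ?case by (auto simp: path_in_Nil_iff)
next
  case (Suc t)
  obtain w l where "(v, w, l) \<in> E" "w \<in> V"
    using automaton_out_edge[OF assms(1,2) Suc.prems] .
  moreover obtain vs ls where "path_in E vs ls" "hd vs = w" "length ls = t"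
    using Suc.IH[OF \<open>w \<in> V\<close>] by blast
  ultimately show ?case
    by (intro exI[of _ "v # vs"] exI[of _ "l # ls"]) (auto simp: path_in_Cons_iff path_in_nonempty)
qed

lemma accepted_words_nonempty:
  assumes "automaton V E" "E \<noteq> {}"
  shows "{ls. length ls = t \<and> accepted E ls} \<noteq> {}"
proof -
  obtain v where "v \<in> V" using assms(1) by (auto simp: automaton_def)
  then show ?thesis using exists_path_from[OF assms \<open>v \<in> V\<close>, of t] by (auto simp: accepted_def)
qed

lemma prodmat_Nil [simp]: "prodmat A [] = mat 1"
  by (simp add: prodmat_def)

lemma fold_prodmat:
  fixes A :: "'l \<Rightarrow> real^'n^'n" and N :: "real^'n^'n"
  shows "fold (\<lambda>l M. A l ** M) ms N = prodmat A ms ** N"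
proof (induction ms arbitrary: N)
  case (Cons m ms)
  have "prodmat A (m # ms) = prodmat A ms ** A m"
    using Cons[of "A m"] by (simp add: prodmat_def)
  then show ?case using Cons[of "A m ** N"] by (simp add: matrix_mul_assoc)
qed (simp add: prodmat_def)

lemma prodmat_append: "prodmat A (ls @ ms) = prodmat A ms ** prodmat A ls"
  unfolding prodmat_def[of A "ls @ ms"] by (simp add: fold_prodmat)

lemma matnorm_mult_vector: "norm (M *v x) \<le> matnorm M * norm x"
  unfolding matnorm_def by (rule onorm) simp

lemma matnorm_nonneg: "0 \<le> matnorm M"
  unfolding matnorm_def by (rule onorm_pos_le) simp

lemma matnorm_le: "(\<And>x. norm (M *v x) \<le> b * norm x) \<Longrightarrow> matnorm M \<le> b"
  unfolding matnorm_def by (rule onorm_le)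

lemma matnorm_mult: "matnorm (M ** N) \<le> matnorm M * matnorm N"
proof (rule matnorm_le)
  fix x
  have "norm ((M ** N) *v x) \<le> matnorm M * norm (N *v x)"
    by (simp add: matrix_vector_mul_assoc[symmetric] matnorm_mult_vector)
  also have "\<dots> \<le> matnorm M * (matnorm N * norm x)"
    by (intro mult_left_mono matnorm_mult_vector matnorm_nonneg)
  finally show "norm ((M ** N) *v x) \<le> matnorm M * matnorm N * norm x" by (simp add: mult.assoc)
qed

section \<open>Fekete's lemma and the constrained joint spectral radius\<close>

lemma submultiplicative_exponential_bound:
  fixes m :: "nat \<Rightarrow> real"
  assumes nonneg: "\<And>t. 0 \<le> m t" and submult: "\<And>s t. m (s + t) \<le> m s * m t"
    and "k \<ge> 1" and "b > 0" and "m k \<le> b ^ k"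
  obtains C where "C > 0" "\<And>t. m t \<le> C * b ^ t"
proof -
  define C where "C = 1 + (\<Sum>r<k. m r / b ^ r)"
  have "C > 0"
    using nonneg \<open>b > 0\<close> by (simp add: C_def add_pos_nonneg sum_nonneg)
  moreover have "m t \<le> C * b ^ t" for t
  proof (induction t rule: less_induct)
    case (less t)
    show ?case
    proof (cases "t < k")
      case True
      have "m t / b ^ t \<le> (\<Sum>r<k. m r / b ^ r)"
        using True nonneg \<open>b > 0\<close> by (intro member_le_sum) auto
      then have "m t / b ^ t \<le> C" by (simp add: C_def)
      then show ?thesis using \<open>b > 0\<close> by (simp add: divide_le_eq)
    next
      case False
      then have "m t \<le> m k * m (t - k)" using submult[of k "t - k"] by simp
      also have "\<dots> \<le> b ^ k * (C * b ^ (t - k))"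
        using less[of "t - k"] False \<open>k \<ge> 1\<close> \<open>m k \<le> b ^ k\<close> nonneg \<open>b > 0\<close>
        by (intro mult_mono) auto
      also have "\<dots> = C * b ^ t"
        using False by (simp add: power_add[symmetric] mult.left_commute)
      finally show ?thesis .
    qed
  qed
  ultimately show ?thesis using that by blast
qed

lemma Fekete_submultiplicative:
  fixes m :: "nat \<Rightarrow> real"
  assumes nonneg: "\<And>t. 0 \<le> m t" and submult: "\<And>s t. m (s + t) \<le> m s * m t"
  shows "(\<lambda>t. root t (m t)) \<longlonglongrightarrow> (INF k\<in>{1..}. root k (m k))"
proof -
  let ?L = "INF k\<in>{1..}. root k (m k)"
  have bdd: "bdd_below ((\<lambda>k. root k (m k)) ` {1..})"
    by (rule bdd_belowI[of _ 0]) (auto intro: real_root_ge_zero nonneg)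
  have lower: "?L \<le> root k (m k)" if "k \<ge> 1" for k
    using that bdd by (intro cINF_lower) auto
  have "?L \<ge> 0"
    by (rule cINF_greatest) (auto intro: real_root_ge_zero nonneg)
  show ?thesis
  proof (rule tendstoI)
    fix r :: real assume "r > 0"
    define e where "e = r / 3"
    have "e > 0" using \<open>r > 0\<close> by (simp add: e_def)
    then obtain k where "k \<ge> 1" and k: "root k (m k) < ?L + e"
      using cINF_less_iff[of "{1..}", OF _ bdd, of "?L + e"] by auto
    define b where "b = ?L + e"
    have "b > 0" using \<open>?L \<ge> 0\<close> \<open>e > 0\<close> by (simp add: b_def)
    have "m k = (root k (m k)) ^ k" using \<open>k \<ge> 1\<close> nonneg by simp
    also have "\<dots> \<le> b ^ k"
      using \<open>k \<ge> 1\<close> k by (intro power_mono) (auto simp: b_def intro: real_root_ge_zero nonneg)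
    finally obtain C where "C > 0" and C: "\<And>t. m t \<le> C * b ^ t"
      using submultiplicative_exponential_bound[OF nonneg submult \<open>k \<ge> 1\<close> \<open>b > 0\<close>] by blast
    have "eventually (\<lambda>t. root t C < 1 + e / b) sequentially"
      using LIMSEQ_root_const[OF \<open>C > 0\<close>] \<open>e > 0\<close> \<open>b > 0\<close>
      by (auto dest!: order_tendstoD(2)[where a = "1 + e / b"])
    then show "eventually (\<lambda>t. dist (root t (m t)) ?L < r) sequentially"
      using eventually_ge_at_top[of 1]
    proof eventually_elim
      case (elim t)
      have "root t (m t) \<le> root t (C * b ^ t)"
        using elim C by (intro real_root_le_mono) auto
      also have "\<dots> = root t C * b"
        using elim \<open>b > 0\<close> by (simp add: real_root_mult real_root_power_cancel)
      also have "\<dots> < (1 + e / b) * b"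
        using elim \<open>b > 0\<close> by (intro mult_strict_right_mono) auto
      also have "\<dots> = ?L + 2 * e" using \<open>b > 0\<close> by (simp add: field_simps b_def)
      finally show ?case
        using lower[of t] elim \<open>e > 0\<close> by (simp add: dist_real_def e_def)
    qed
  qed
qed

definition max_prod_norm :: "('v \<times> 'v \<times> 'l) set \<Rightarrow> ('l \<Rightarrow> real^'n^'n) \<Rightarrow> nat \<Rightarrow> real" where
  "max_prod_norm E A t = Max ((\<lambda>ls. matnorm (prodmat A ls)) ` {ls. length ls = t \<and> accepted E ls})"

context
  fixes V :: "'v set" and E :: "('v \<times> 'v \<times> 'l) set" and A :: "'l \<Rightarrow> real^'n^'n"
  assumes aut: "automaton V E" and "E \<noteq> {}"
begin

lemma matnorm_le_max_prod_norm:
  "length ls = t \<Longrightarrow> accepted E ls \<Longrightarrow> matnorm (prodmat A ls) \<le> max_prod_norm E A t"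
  unfolding max_prod_norm_def using finite_accepted_words[OF aut] by (intro Max_ge) auto

lemma max_prod_norm_le:
  "(\<And>ls. length ls = t \<Longrightarrow> accepted E ls \<Longrightarrow> matnorm (prodmat A ls) \<le> b) \<Longrightarrow> max_prod_norm E A t \<le> b"
  unfolding max_prod_norm_def
  using finite_accepted_words[OF aut] accepted_words_nonempty[OF aut \<open>E \<noteq> {}\<close>] by (subst Max_le_iff) auto

lemma max_prod_norm_nonneg: "0 \<le> max_prod_norm E A t"
proof -
  obtain ls where "length ls = t" "accepted E ls"
    using accepted_words_nonempty[OF aut \<open>E \<noteq> {}\<close>] by auto
  then show ?thesis
    using matnorm_le_max_prod_norm matnorm_nonneg order_trans by blast
qed

lemma max_prod_norm_submult: "max_prod_norm E A (s + t) \<le> max_prod_norm E A s * max_prod_norm E A t"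
proof (rule max_prod_norm_le)
  fix ls :: "'l list" assume "length ls = s + t" and "accepted E ls"
  have "accepted E (take s ls)" "accepted E (drop s ls)"
    using accepted_appendD[of E "take s ls" "drop s ls"] \<open>accepted E ls\<close> by auto
  have "matnorm (prodmat A ls) = matnorm (prodmat A (drop s ls) ** prodmat A (take s ls))"
    by (metis append_take_drop_id prodmat_append)
  also have "\<dots> \<le> matnorm (prodmat A (drop s ls)) * matnorm (prodmat A (take s ls))"
    by (rule matnorm_mult)
  also have "\<dots> \<le> max_prod_norm E A t * max_prod_norm E A s"
    using \<open>length ls = s + t\<close> \<open>accepted E (take s ls)\<close> \<open>accepted E (drop s ls)\<close>
    by (intro mult_mono matnorm_le_max_prod_norm matnorm_nonneg max_prod_norm_nonneg) auto
  finally show "matnorm (prodmat A ls) \<le> max_prod_norm E A s * max_prod_norm E A t"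
    by (simp add: mult.commute)
qed

lemma cjsr_eq_Inf: "cjsr E A = (INF k\<in>{1..}. root k (max_prod_norm E A k))"
proof -
  have "root t (max_prod_norm E A t)
      = Max ((\<lambda>ls. root t (matnorm (prodmat A ls))) ` {ls. length ls = t \<and> accepted E ls})" for t
  proof -
    have "mono (root t)"
      by (cases "t = 0") (auto simp: mono_def intro: real_root_le_mono)
    then show ?thesis
      unfolding max_prod_norm_def
      using finite_accepted_words[OF aut] accepted_words_nonempty[OF aut \<open>E \<noteq> {}\<close>]
      by (subst mono_Max_commute) (auto simp: image_image)
  qed
  then have "cjsr E A = lim (\<lambda>t. root t (max_prod_norm E A t))"
    by (simp add: cjsr_def)
  then show ?thesis
    using Fekete_submultiplicative[OF max_prod_norm_nonneg max_prod_norm_submult] by (simp add: limI)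
qed

lemma cjsr_tendsto: "(\<lambda>t. root t (max_prod_norm E A t)) \<longlonglongrightarrow> cjsr E A"
  unfolding cjsr_eq_Inf by (rule Fekete_submultiplicative[OF max_prod_norm_nonneg max_prod_norm_submult])

lemma cjsr_le_root: "k \<ge> 1 \<Longrightarrow> cjsr E A \<le> root k (max_prod_norm E A k)"
  unfolding cjsr_eq_Inf
  by (rule cINF_lower) (auto intro!: bdd_belowI[of _ 0] real_root_ge_zero max_prod_norm_nonneg)

lemma cjsr_nonneg: "0 \<le> cjsr E A"
  unfolding cjsr_eq_Inf
  by (rule cINF_greatest) (auto intro: real_root_ge_zero max_prod_norm_nonneg)

lemma max_prod_norm_exponential_bound:
  assumes "b > cjsr E A"
  obtains C where "C > 0" "\<And>t. max_prod_norm E A t \<le> C * b ^ t"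
proof -
  have "eventually (\<lambda>t. root t (max_prod_norm E A t) < b \<and> t \<ge> 1) sequentially"
    using order_tendstoD(2)[OF cjsr_tendsto assms] eventually_ge_at_top by (rule eventually_conj)
  then obtain k where k: "root k (max_prod_norm E A k) < b" "k \<ge> 1"
    by (auto simp: eventually_sequentially)
  have "b > 0" using assms cjsr_nonneg by linarith
  have "max_prod_norm E A k = (root k (max_prod_norm E A k)) ^ k"
    using k max_prod_norm_nonneg by simp
  also have "\<dots> \<le> b ^ k"
    using k by (intro power_mono) (auto intro: real_root_ge_zero max_prod_norm_nonneg)
  finally show ?thesis
    using submultiplicative_exponential_bound[OF max_prod_norm_nonneg max_prod_norm_submult \<open>k \<ge> 1\<close> \<open>b > 0\<close>] that
    by blast
qed

end

section \<open>Lyapunov functions of the lift bound the CJSR\<close>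

lemma uniform_quad_form_bounds:
  assumes "finite V" and "\<And>v. v \<in> V \<Longrightarrow> pd (Q v)"
  obtains a B where "a > 0" "B \<ge> 0" "\<And>v x. v \<in> V \<Longrightarrow> a * (norm x)\<^sup>2 \<le> quad_form (Q v) x"
    "\<And>v x. v \<in> V \<Longrightarrow> quad_form (Q v) x \<le> B * (norm x)\<^sup>2"
proof -
  have "\<exists>a>0. \<forall>x. a * (norm x)\<^sup>2 \<le> quad_form (Q v) x" if "v \<in> V" for v
    using pd_quad_form_lower_bound[OF assms(2)[OF that]] by metis
  then obtain a where a: "\<And>v. v \<in> V \<Longrightarrow> a v > 0 \<and> (\<forall>x. a v * (norm x)\<^sup>2 \<le> quad_form (Q v) x)"
    by metis
  define a0 where "a0 = Min (insert 1 (a ` V))"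
  define B where "B = Max (insert 0 ((\<lambda>v. matnorm (Q v)) ` V))"
  have "a0 > 0" using assms(1) a by (simp add: a0_def)
  moreover have "B \<ge> 0" using assms(1) by (simp add: B_def)
  moreover have "a0 * (norm x)\<^sup>2 \<le> quad_form (Q v) x" if "v \<in> V" for v x
  proof -
    have "a0 * (norm x)\<^sup>2 \<le> a v * (norm x)\<^sup>2"
      using assms(1) that by (intro mult_right_mono) (auto simp: a0_def)
    also have "\<dots> \<le> quad_form (Q v) x" using a[OF that] by blast
    finally show ?thesis .
  qed
  moreover have "quad_form (Q v) x \<le> B * (norm x)\<^sup>2" if "v \<in> V" for v x
  proof -
    have "quad_form (Q v) x \<le> matnorm (Q v) * (norm x)\<^sup>2" by (rule quad_form_le_matnorm)
    also have "\<dots> \<le> B * (norm x)\<^sup>2"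
      using assms(1) that by (intro mult_right_mono) (auto simp: B_def)
    finally show ?thesis .
  qed
  ultimately show ?thesis using that by blast
qed

lemma lift_edge_of_path:
  "path_in E vs ls \<Longrightarrow> length ls = T \<Longrightarrow> (hd vs, last vs, ls) \<in> lift_edges E T"
  unfolding lift_edges_def by blast

lemma lyapunov_along_path:
  assumes lyap: "\<And>v w l x. (v, w, l) \<in> lift_edges E T \<Longrightarrow>
      quad_form (Q w) (prodmat A l *v x) \<le> \<gamma>\<^sup>2 * quad_form (Q v) x"
  shows "path_in E vs ls \<Longrightarrow> length ls = k * T \<Longrightarrow>
     quad_form (Q (last vs)) (prodmat A ls *v x) \<le> \<gamma> ^ (2 * k) * quad_form (Q (hd vs)) x"
proof (induction k arbitrary: vs ls)
  case 0
  then obtain v where "vs = [v]" by (auto simp: path_in_Nil_iff)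
  then show ?case using 0 by simp
next
  case (Suc k)
  define p where "p = k * T"
  have "p \<le> length ls" using Suc.prems(2) by (simp add: p_def)
  note path = Suc.prems(1)
  have head: "path_in E (take (Suc p) vs) (take p ls)" and tail: "path_in E (drop p vs) (drop p ls)"
    using path_in_take[OF path \<open>p \<le> _\<close>] path_in_drop[OF path \<open>p \<le> _\<close>] .
  have "(hd (drop p vs), last vs, drop p ls) \<in> lift_edges E T"
    using lift_edge_of_path[OF tail] Suc.prems(2) path_in_nonempty[OF tail]
    by (simp add: p_def)
  moreover have "hd (take (Suc p) vs) = hd vs" by simp
  moreover have "prodmat A ls *v x = prodmat A (drop p ls) *v (prodmat A (take p ls) *v x)"
    by (metis append_take_drop_id matrix_vector_mul_assoc prodmat_append)
  ultimately have "quad_form (Q (last vs)) (prodmat A ls *v x)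
      \<le> \<gamma>\<^sup>2 * quad_form (Q (last (take (Suc p) vs))) (prodmat A (take p ls) *v x)"
    using lyap last_take_path_in[OF path \<open>p \<le> _\<close>] by simp
  also have "\<dots> \<le> \<gamma>\<^sup>2 * (\<gamma> ^ (2 * k) * quad_form (Q (hd vs)) x)"
    using Suc.IH[OF head] \<open>p \<le> _\<close> by (intro mult_left_mono) (auto simp: p_def)
  finally show ?case by (simp add: power2_eq_square mult.assoc)
qed

context
  fixes V :: "'v set" and E :: "('v \<times> 'v \<times> 'l) set" and A :: "'l \<Rightarrow> real^'n^'n"
  assumes aut: "automaton V E" and "E \<noteq> {}"
begin

lemma cjsr_le_of_bound_on_multiples:
  assumes "T \<ge> 1" "D \<ge> 0" "\<gamma> \<ge> 0" and bound: "\<And>k. k \<ge> 1 \<Longrightarrow> max_prod_norm E A (k * T) \<le> D * \<gamma> ^ k"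
  shows "cjsr E A \<le> root T \<gamma>"
proof -
  have le: "cjsr E A \<le> root (k * T) D * root T \<gamma>" if "k \<ge> 1" for k
  proof -
    have "cjsr E A \<le> root (k * T) (max_prod_norm E A (k * T))"
      using cjsr_le_root[OF aut \<open>E \<noteq> {}\<close>, of "k * T"] that \<open>T \<ge> 1\<close> by simp
    also have "\<dots> \<le> root (k * T) (D * \<gamma> ^ k)"
      using bound[OF that] that \<open>T \<ge> 1\<close> by (intro real_root_le_mono) auto
    also have "\<dots> = root (k * T) D * root T (root k (\<gamma> ^ k))"
      by (simp add: real_root_mult real_root_mult_exp mult.commute)
    also have "root k (\<gamma> ^ k) = \<gamma>"
      using that \<open>\<gamma> \<ge> 0\<close> by (simp add: real_root_power_cancel)
    finally show ?thesis .
  qed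
  show ?thesis
  proof (cases "D = 0")
    case True
    then show ?thesis using le[of 1] real_root_ge_zero[OF \<open>\<gamma> \<ge> 0\<close>, of T] by simp
  next
    case False
    have "strict_mono (\<lambda>k. k * T)" using \<open>T \<ge> 1\<close> by (simp add: strict_mono_def)
    then have "(\<lambda>k. root (k * T) D) \<longlonglongrightarrow> 1"
      using LIMSEQ_subseq_LIMSEQ[OF LIMSEQ_root_const] False \<open>D \<ge> 0\<close> by (simp add: o_def)
    then have "(\<lambda>k. root (k * T) D * root T \<gamma>) \<longlonglongrightarrow> root T \<gamma>"
      using tendsto_mult_right[of _ 1 _ "root T \<gamma>"] by simp
    then show ?thesis
      using le by (intro LIMSEQ_le_const) (auto intro: exI[of _ 1])
  qed
qed

theorem cjsr_le_root_lyapunov: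
  assumes "T \<ge> 1" "\<gamma> \<ge> 0" and Q: "\<And>v. v \<in> V \<Longrightarrow> pd (Q v)"
    and lyap: "\<And>v w l x. (v, w, l) \<in> lift_edges E T \<Longrightarrow>
      quad_form (Q w) (prodmat A l *v x) \<le> \<gamma>\<^sup>2 * quad_form (Q v) x"
  shows "cjsr E A \<le> root T \<gamma>"
proof -
  obtain a B where "a > 0" "B \<ge> 0" and lower: "\<And>v x. v \<in> V \<Longrightarrow> a * (norm x)\<^sup>2 \<le> quad_form (Q v) x"
    and upper: "\<And>v x. v \<in> V \<Longrightarrow> quad_form (Q v) x \<le> B * (norm x)\<^sup>2"
    using uniform_quad_form_bounds[of V Q] aut Q by (auto simp: automaton_def)
  show ?thesis
  proof (rule cjsr_le_of_bound_on_multiples)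
    fix k :: nat assume "k \<ge> 1"
    show "max_prod_norm E A (k * T) \<le> sqrt (B / a) * \<gamma> ^ k"
    proof (rule max_prod_norm_le[OF aut \<open>E \<noteq> {}\<close>], rule matnorm_le)
      fix ls x assume "length ls = k * T" "accepted E ls"
      then obtain vs where path: "path_in E vs ls" by (auto simp: accepted_def)
      have "ls \<noteq> []" using \<open>length ls = k * T\<close> \<open>k \<ge> 1\<close> \<open>T \<ge> 1\<close> by auto
      then have "hd vs \<in> V" "last vs \<in> V"
        using path_in_subset_nodes[OF aut path] path_in_nonempty[OF path] by auto
      have "a * (norm (prodmat A ls *v x))\<^sup>2 \<le> \<gamma> ^ (2 * k) * quad_form (Q (hd vs)) x"
        using lower[OF \<open>last vs \<in> V\<close>] lyapunov_along_path[OF lyap path \<open>length ls = k * T\<close>]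
        by (rule order_trans)
      also have "\<dots> \<le> \<gamma> ^ (2 * k) * (B * (norm x)\<^sup>2)"
        using upper[OF \<open>hd vs \<in> V\<close>] \<open>\<gamma> \<ge> 0\<close> by (intro mult_left_mono) auto
      finally have "(norm (prodmat A ls *v x))\<^sup>2 \<le> (sqrt (B / a) * \<gamma> ^ k * norm x)\<^sup>2"
        using \<open>a > 0\<close> \<open>B \<ge> 0\<close>
        by (simp add: field_simps power_mult_distrib power_mult[symmetric] mult.commute)
      then show "norm (prodmat A ls *v x) \<le> sqrt (B / a) * \<gamma> ^ k * norm x"
        by (rule power2_le_imp_le) (use \<open>a > 0\<close> \<open>B \<ge> 0\<close> \<open>\<gamma> \<ge> 0\<close> in simp)
    qed
  qed (use assms \<open>a > 0\<close> \<open>B \<ge> 0\<close> in auto)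
qed

end

section \<open>Extremal norms of the lift\<close>

lemma equivalent_norm_SUP:
  fixes F :: "(real^'n^'n) set"
  assumes "mat 1 \<in> F" and bounded: "\<And>M x. M \<in> F \<Longrightarrow> norm (M *v x) \<le> C * norm x"
  shows "equivalent_norm (\<lambda>x. SUP M\<in>F. norm (M *v x)) C"
proof -
  define N where "N x = (SUP M\<in>F. norm (M *v x))" for x
  have bdd: "bdd_above ((\<lambda>M. norm (M *v x)) ` F)" for x
    using bounded by (intro bdd_aboveI[of _ "C * norm x"]) auto
  have upper: "norm (M *v x) \<le> N x" if "M \<in> F" for M x
    unfolding N_def using that bdd by (rule cSUP_upper)
  have scaleR_le: "N (c *\<^sub>R x) \<le> \<bar>c\<bar> * N x" for c x
    unfolding N_def[of "c *\<^sub>R x"] using \<open>mat 1 \<in> F\<close>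
    by (intro cSUP_least) (auto simp: matrix_vector_mult_scaleR intro: mult_left_mono upper)
  have "equivalent_norm N C"
  proof
    show "N (x + y) \<le> N x + N y" for x y
      unfolding N_def[of "x + y"] using \<open>mat 1 \<in> F\<close>
      by (intro cSUP_least)
        (auto simp: matrix_vector_right_distrib intro: order_trans[OF norm_triangle_ineq] add_mono upper)
    show "norm x \<le> N x" for x using upper[OF \<open>mat 1 \<in> F\<close>, of x] by simp
    show "N x \<le> C * norm x" for x
      unfolding N_def using \<open>mat 1 \<in> F\<close> bounded by (intro cSUP_least) auto
    show "N (c *\<^sub>R x) = \<bar>c\<bar> * N x" for c x
    proof (cases "c = 0")
      case True
      then show ?thesis using scaleR_le[of c x] upper[OF \<open>mat 1 \<in> F\<close>, of 0] by simp
    next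
      case False
      have "\<bar>c\<bar> * N x = \<bar>c\<bar> * N ((1 / c) *\<^sub>R (c *\<^sub>R x))" using False by simp
      also have "\<dots> \<le> \<bar>c\<bar> * (\<bar>1 / c\<bar> * N (c *\<^sub>R x))"
        by (intro mult_left_mono scaleR_le) simp
      also have "\<dots> = N (c *\<^sub>R x)" using False by (simp add: abs_divide)
      finally show ?thesis using scaleR_le[of c x] by simp
    qed
  qed
  then show ?thesis by (simp add: N_def[abs_def])
qed

text \<open>Scaling by \<open>\<mu>\<close> per lifted step makes the supremum \<open>extremal_norm\<close> below contract by
  \<open>\<mu>\<close> along every lifted edge.\<close>
definition normalized_lift_products ::
    "('v \<times> 'v \<times> 'l) set \<Rightarrow> ('l \<Rightarrow> real^'n^'n) \<Rightarrow> nat \<Rightarrow> real \<Rightarrow> 'v \<Rightarrow> (real^'n^'n) set" where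
  "normalized_lift_products E A T \<mu> v =
     {(1 / \<mu> ^ k) *\<^sub>R prodmat A ls | k ls. \<exists>vs. path_in E vs ls \<and> hd vs = v \<and> length ls = k * T}"

lemma mat_1_normalized_lift_products: "mat 1 \<in> normalized_lift_products E A T \<mu> v"
proof -
  have "path_in E [v] []" by (simp add: path_in_def)
  then have "(1 / \<mu> ^ 0) *\<^sub>R prodmat A [] \<in> normalized_lift_products E A T \<mu> v"
    unfolding normalized_lift_products_def by force
  then show ?thesis by simp
qed

lemma normalized_lift_products_step:
  assumes "(v, w, l) \<in> lift_edges E T" and "M \<in> normalized_lift_products E A T \<mu> w" and "\<mu> > 0"
  shows "(1 / \<mu>) *\<^sub>R (M ** prodmat A l) \<in> normalized_lift_products E A T \<mu> v"
proof -
  obtain vs0 where p0: "path_in E vs0 l" "hd vs0 = v" "last vs0 = w" and "length l = T"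
    using assms(1) by (auto simp: lift_edges_def)
  obtain k ls vs where M: "M = (1 / \<mu> ^ k) *\<^sub>R prodmat A ls" and p: "path_in E vs ls" "hd vs = w"
    and "length ls = k * T"
    using assms(2) by (auto simp: normalized_lift_products_def)
  have "path_in E (vs0 @ tl vs) (l @ ls)" "hd (vs0 @ tl vs) = v"
    using path_in_append[OF p0(1) p(1)] p0 p(2) path_in_nonempty[OF p0(1)] by simp_all
  moreover have "length (l @ ls) = Suc k * T" using \<open>length l = T\<close> \<open>length ls = k * T\<close> by simp
  moreover have "(1 / \<mu>) *\<^sub>R (M ** prodmat A l) = (1 / \<mu> ^ Suc k) *\<^sub>R prodmat A (l @ ls)"
    using \<open>\<mu> > 0\<close> by (simp add: M prodmat_append scalar_matrix_assoc[symmetric])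
  ultimately show ?thesis unfolding normalized_lift_products_def by blast
qed

definition extremal_norm ::
    "('v \<times> 'v \<times> 'l) set \<Rightarrow> ('l \<Rightarrow> real^'n^'n) \<Rightarrow> nat \<Rightarrow> real \<Rightarrow> 'v \<Rightarrow> real^'n \<Rightarrow> real" where
  "extremal_norm E A T \<mu> v x = (SUP M\<in>normalized_lift_products E A T \<mu> v. norm (M *v x))"

context
  fixes V :: "'v set" and E :: "('v \<times> 'v \<times> 'l) set" and A :: "'l \<Rightarrow> real^'n^'n"
    and T :: nat and \<mu> :: real
  assumes aut: "automaton V E" and "E \<noteq> {}" and "T \<ge> 1" and \<mu>: "\<mu> > cjsr E A ^ T"
begin

lemma normalized_lift_products_bounded:
  "\<exists>C. \<forall>v M x. M \<in> normalized_lift_products E A T \<mu> v \<longrightarrow> norm (M *v x) \<le> C * norm x"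
proof -
  have "\<mu> > 0" using \<mu> cjsr_nonneg[OF aut \<open>E \<noteq> {}\<close>] by (meson le_less_trans zero_le_power)
  define b where "b = root T \<mu>"
  have "cjsr E A = root T (cjsr E A ^ T)"
    using \<open>T \<ge> 1\<close> cjsr_nonneg[OF aut \<open>E \<noteq> {}\<close>] by (intro real_root_power_cancel[symmetric]) auto
  also have "\<dots> < b" unfolding b_def using \<open>T \<ge> 1\<close> \<mu> by (intro real_root_less_mono) auto
  finally obtain C where C: "\<And>t. max_prod_norm E A t \<le> C * b ^ t"
    using max_prod_norm_exponential_bound[OF aut \<open>E \<noteq> {}\<close>] by blast
  have "norm (M *v x) \<le> C * norm x" if M: "M \<in> normalized_lift_products E A T \<mu> v" for v M x
  proof -
    obtain k ls vs where M: "M = (1 / \<mu> ^ k) *\<^sub>R prodmat A ls" and "path_in E vs ls" "length ls = k * T"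
      using M by (auto simp: normalized_lift_products_def)
    then have "accepted E ls" by (auto simp: accepted_def)
    have "norm (M *v x) = norm (prodmat A ls *v x) / \<mu> ^ k"
      using \<open>\<mu> > 0\<close> by (simp add: M scaleR_matrix_vector_assoc[symmetric])
    also have "\<dots> \<le> max_prod_norm E A (k * T) * norm x / \<mu> ^ k"
    proof (intro divide_right_mono)
      have "norm (prodmat A ls *v x) \<le> matnorm (prodmat A ls) * norm x"
        by (rule matnorm_mult_vector)
      also have "\<dots> \<le> max_prod_norm E A (k * T) * norm x"
        using matnorm_le_max_prod_norm[OF aut \<open>E \<noteq> {}\<close> \<open>length ls = k * T\<close> \<open>accepted E ls\<close>]
        by (intro mult_right_mono) auto
      finally show "norm (prodmat A ls *v x) \<le> max_prod_norm E A (k * T) * norm x" .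
    qed (use \<open>\<mu> > 0\<close> in simp)
    also have "\<dots> \<le> C * b ^ (k * T) * norm x / \<mu> ^ k"
      using C \<open>\<mu> > 0\<close> by (intro divide_right_mono mult_right_mono) auto
    also have "b ^ (k * T) = (b ^ T) ^ k" by (simp add: power_mult[symmetric] mult.commute)
    also have "b ^ T = \<mu>"
      unfolding b_def using \<open>T \<ge> 1\<close> \<open>\<mu> > 0\<close> by (intro real_root_pow_pos2) auto
    finally show ?thesis using \<open>\<mu> > 0\<close> by simp
  qed
  then show ?thesis by blast
qed

lemma equivalent_norm_extremal_norm: "\<exists>C. \<forall>v. equivalent_norm (extremal_norm E A T \<mu> v) C"
proof -
  obtain C where "\<And>v M x. M \<in> normalized_lift_products E A T \<mu> v \<Longrightarrow> norm (M *v x) \<le> C * norm x"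
    using normalized_lift_products_bounded by blast
  then have "equivalent_norm (extremal_norm E A T \<mu> v) C" for v
    unfolding extremal_norm_def[abs_def] by (intro equivalent_norm_SUP mat_1_normalized_lift_products)
  then show ?thesis by blast
qed

lemma extremal_norm_lift_edge:
  assumes "(v, w, l) \<in> lift_edges E T"
  shows "extremal_norm E A T \<mu> w (prodmat A l *v x) \<le> \<mu> * extremal_norm E A T \<mu> v x"
proof -
  obtain C where bounded: "\<And>v M x. M \<in> normalized_lift_products E A T \<mu> v \<Longrightarrow> norm (M *v x) \<le> C * norm x"
    using normalized_lift_products_bounded by blast
  have "\<mu> > 0" using \<mu> cjsr_nonneg[OF aut \<open>E \<noteq> {}\<close>] by (meson le_less_trans zero_le_power)
  show ?thesis
    unfolding extremal_norm_def[of _ _ _ _ w]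
  proof (rule cSUP_least)
    show "normalized_lift_products E A T \<mu> w \<noteq> {}"
      using mat_1_normalized_lift_products[of E A T \<mu> w] by blast
    fix M assume "M \<in> normalized_lift_products E A T \<mu> w"
    then have step: "(1 / \<mu>) *\<^sub>R (M ** prodmat A l) \<in> normalized_lift_products E A T \<mu> v"
      using normalized_lift_products_step[OF assms _ \<open>\<mu> > 0\<close>] by blast
    have "norm (M *v (prodmat A l *v x)) = \<mu> * norm (((1 / \<mu>) *\<^sub>R (M ** prodmat A l)) *v x)"
      using \<open>\<mu> > 0\<close> by (simp add: scaleR_matrix_vector_assoc[symmetric] matrix_vector_mul_assoc)
    also have "\<dots> \<le> \<mu> * extremal_norm E A T \<mu> v x"
      unfolding extremal_norm_def using \<open>\<mu> > 0\<close> bounded step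
      by (intro mult_left_mono cSUP_upper bdd_aboveI[of _ "C * norm x"]) auto
    finally show "norm (M *v (prodmat A l *v x)) \<le> \<mu> * extremal_norm E A T \<mu> v x" .
  qed
qed

text \<open>John's ellipsoid for the extremal norm at each node turns the contraction by \<open>\<mu>\<close> of the
  extremal norm into a quadratic Lyapunov inequality, losing the factor \<open>\<surd>n\<close>.\<close>
theorem lift_quadratic_lyapunov:
  obtains Q where "\<And>v. transpose (Q v) = Q v" "\<And>v. pd (Q v)"
    "\<And>v w l x. (v, w, l) \<in> lift_edges E T \<Longrightarrow>
       quad_form (Q w) (prodmat A l *v x) \<le> (sqrt CARD('n) * \<mu>)\<^sup>2 * quad_form (Q v) x"
proof -
  let ?N = "extremal_norm E A T \<mu>"
  obtain C where norms: "\<And>v. equivalent_norm (?N v) C"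
    using equivalent_norm_extremal_norm by blast
  have "\<forall>v. \<exists>P. transpose P = P \<and> pd P \<and> (\<forall>x. quad_form P x \<le> (?N v x)\<^sup>2)
      \<and> (\<forall>x. (?N v x)\<^sup>2 \<le> CARD('n) * quad_form P x)"
    using equivalent_norm.john_ellipsoid[OF norms] by blast
  then obtain Q where "\<forall>v. transpose (Q v) = Q v \<and> pd (Q v) \<and> (\<forall>x. quad_form (Q v) x \<le> (?N v x)\<^sup>2)
      \<and> (\<forall>x. (?N v x)\<^sup>2 \<le> CARD('n) * quad_form (Q v) x)"
    by (auto dest: choice)
  then have Q: "\<And>v. transpose (Q v) = Q v" "\<And>v. pd (Q v)"
    "\<And>v x. quad_form (Q v) x \<le> (?N v x)\<^sup>2" "\<And>v x. (?N v x)\<^sup>2 \<le> CARD('n) * quad_form (Q v) x"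
    by blast+
  have "quad_form (Q w) (prodmat A l *v x) \<le> (sqrt CARD('n) * \<mu>)\<^sup>2 * quad_form (Q v) x"
    if "(v, w, l) \<in> lift_edges E T" for v w l x
  proof -
    have "quad_form (Q w) (prodmat A l *v x) \<le> (?N w (prodmat A l *v x))\<^sup>2" by (rule Q(3))
    also have "\<dots> \<le> (\<mu> * ?N v x)\<^sup>2"
      using extremal_norm_lift_edge[OF that] equivalent_norm.nonneg[OF norms]
      by (intro power_mono) auto
    also have "\<dots> \<le> \<mu>\<^sup>2 * (CARD('n) * quad_form (Q v) x)"
      using Q(4) by (simp add: power_mult_distrib mult_left_mono)
    finally show ?thesis by (simp add: power_mult_distrib mult_ac)
  qed
  with Q that show ?thesis by blast
qed

end

section \<open>Bounds on the Lyapunov rate of the lift\<close>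

lemma lift_length_bounds:
  fixes n r :: real
  assumes "n > 1" and "r > 0" and T: "T = nat \<lceil>ln n / (2 * ln (1 + r))\<rceil>"
  shows "T \<ge> 1" and "root T (sqrt n) \<le> 1 + r"
proof -
  have "ln n > 0" "ln (1 + r) > 0" using assms by simp_all
  have T_ge: "real T \<ge> ln n / (2 * ln (1 + r))" unfolding T by (rule real_nat_ceiling_ge)
  moreover have "ln n / (2 * ln (1 + r)) > 0" using \<open>ln n > 0\<close> \<open>ln (1 + r) > 0\<close> by simp
  ultimately show "T \<ge> 1" by linarith
  have "ln n \<le> real (2 * T) * ln (1 + r)"
    using T_ge \<open>ln (1 + r) > 0\<close> by (simp add: divide_le_eq mult_ac)
  also have "\<dots> = ln ((1 + r) ^ (2 * T))" using \<open>r > 0\<close> by (simp add: ln_realpow)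
  finally have "sqrt n \<le> sqrt (((1 + r) ^ T)\<^sup>2)"
    using assms by (simp add: power_mult[symmetric] mult.commute)
  then have "root T (sqrt n) \<le> root T ((1 + r) ^ T)"
    using \<open>T \<ge> 1\<close> \<open>r > 0\<close> by (intro real_root_le_mono) auto
  also have "\<dots> = 1 + r" using \<open>T \<ge> 1\<close> \<open>r > 0\<close> by (simp add: real_root_power_cancel)
  finally show "root T (sqrt n) \<le> 1 + r" .
qed

context
  fixes V :: "'v set" and E :: "('v \<times> 'v \<times> 'l) set" and A :: "'l \<Rightarrow> real^'n^'n" and T :: nat
  assumes aut: "automaton V E" and "E \<noteq> {}" and "T \<ge> 1"
begin

definition lift_lyapunov_rates :: "real set" where
  "lift_lyapunov_rates = {\<gamma>. \<gamma> \<ge> 0 \<and> (\<exists>Q :: 'v \<Rightarrow> real^'n^'n. (\<forall>v \<in> V. transpose (Q v) = Q v \<and> pd (Q v)) \<and>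
      (\<forall>(v, w, l) \<in> lift_edges E T. psd (\<gamma>\<^sup>2 *\<^sub>R Q v - transpose (prodmat A l) ** Q w ** prodmat A l)))}"

lemma gamma_star_lift_eq: "gamma_star V (lift_edges E T) (prodmat A) = Inf lift_lyapunov_rates"
  by (simp add: gamma_star_def lift_lyapunov_rates_def)

lemma sqrt_card_mult_in_lift_lyapunov_rates:
  assumes "\<mu> > cjsr E A ^ T"
  shows "sqrt CARD('n) * \<mu> \<in> lift_lyapunov_rates"
proof -
  obtain Q :: "'v \<Rightarrow> real^'n^'n" where "\<And>v. transpose (Q v) = Q v" "\<And>v. pd (Q v)"
    "\<And>v w l x. (v, w, l) \<in> lift_edges E T \<Longrightarrow>
       quad_form (Q w) (prodmat A l *v x) \<le> (sqrt CARD('n) * \<mu>)\<^sup>2 * quad_form (Q v) x"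
    using lift_quadratic_lyapunov[OF aut \<open>E \<noteq> {}\<close> \<open>T \<ge> 1\<close> assms] by blast
  moreover have "\<mu> \<ge> 0"
    using assms zero_le_power[OF cjsr_nonneg[OF aut \<open>E \<noteq> {}\<close>], of A T] by linarith
  ultimately show ?thesis
    by (auto simp: lift_lyapunov_rates_def psd_diff_congruence_iff intro!: exI[of _ Q])
qed

lemma cjsr_power_le_lift_lyapunov_rate:
  assumes "\<gamma> \<in> lift_lyapunov_rates"
  shows "cjsr E A ^ T \<le> \<gamma>"
proof -
  obtain Q :: "'v \<Rightarrow> real^'n^'n" where "\<gamma> \<ge> 0" and "\<forall>v\<in>V. pd (Q v)"
    and "\<forall>(v, w, l) \<in> lift_edges E T. \<forall>x. quad_form (Q w) (prodmat A l *v x) \<le> \<gamma>\<^sup>2 * quad_form (Q v) x"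
    using assms by (auto simp: lift_lyapunov_rates_def psd_diff_congruence_iff)
  then have "cjsr E A \<le> root T \<gamma>"
    by (intro cjsr_le_root_lyapunov[OF aut \<open>E \<noteq> {}\<close> \<open>T \<ge> 1\<close>]) auto
  then have "cjsr E A ^ T \<le> root T \<gamma> ^ T"
    using cjsr_nonneg[OF aut \<open>E \<noteq> {}\<close>] by (intro power_mono) auto
  then show ?thesis
    using \<open>T \<ge> 1\<close> \<open>\<gamma> \<ge> 0\<close> by simp
qed

theorem gamma_star_lift_bounds:
  "cjsr E A ^ T \<le> gamma_star V (lift_edges E T) (prodmat A)"
  "gamma_star V (lift_edges E T) (prodmat A) \<le> sqrt CARD('n) * cjsr E A ^ T"
proof -
  have nonempty: "lift_lyapunov_rates \<noteq> {}"
    using sqrt_card_mult_in_lift_lyapunov_rates[of "cjsr E A ^ T + 1"] by auto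
  have bdd: "bdd_below lift_lyapunov_rates"
    by (rule bdd_belowI[of _ 0]) (auto simp: lift_lyapunov_rates_def)
  show "cjsr E A ^ T \<le> gamma_star V (lift_edges E T) (prodmat A)"
    unfolding gamma_star_lift_eq
    using nonempty cjsr_power_le_lift_lyapunov_rate by (rule cInf_greatest)
  have "Inf lift_lyapunov_rates / sqrt CARD('n) \<le> cjsr E A ^ T"
  proof (rule dense_ge)
    fix \<mu> assume "cjsr E A ^ T < \<mu>"
    then have "Inf lift_lyapunov_rates \<le> sqrt CARD('n) * \<mu>"
      using bdd sqrt_card_mult_in_lift_lyapunov_rates by (intro cInf_lower)
    then show "Inf lift_lyapunov_rates / sqrt CARD('n) \<le> \<mu>"
      by (simp add: divide_le_eq mult.commute)
  qed
  then show "gamma_star V (lift_edges E T) (prodmat A) \<le> sqrt CARD('n) * cjsr E A ^ T"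
    unfolding gamma_star_lift_eq by (simp add: divide_le_eq mult.commute)
qed

end

theorem corollary3p5:
  fixes V :: "'v set" and E :: "('v \<times> 'v \<times> 'l) set" and A :: "'l \<Rightarrow> real^'n^'n"
    and r :: real and T :: nat
  assumes "automaton V E" and "E \<noteq> {}" and "CARD('n) \<ge> 2" and "r > 0"
    and "T = nat \<lceil>ln (real CARD('n)) / (2 * ln (1 + r))\<rceil>"
  shows "cjsr E A \<le> root T (gamma_star V (lift_edges E T) (prodmat A)) \<and>
         root T (gamma_star V (lift_edges E T) (prodmat A)) \<le> (1 + r) * cjsr E A"
proof
  let ?c = "cjsr E A" and ?g = "gamma_star V (lift_edges E T) (prodmat A)"
  have "T \<ge> 1" and root_sqrt: "root T (sqrt CARD('n)) \<le> 1 + r"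
    using lift_length_bounds[of "real CARD('n)" r T] assms(3-5) by auto
  note bounds = gamma_star_lift_bounds[OF assms(1,2) \<open>T \<ge> 1\<close>, of A]
  have "?c \<ge> 0" by (rule cjsr_nonneg[OF assms(1,2)])
  have "?c = root T (?c ^ T)" using \<open>T \<ge> 1\<close> \<open>?c \<ge> 0\<close> by (simp add: real_root_power_cancel)
  also have "\<dots> \<le> root T ?g" using \<open>T \<ge> 1\<close> bounds(1) by (intro real_root_le_mono) auto
  finally show "?c \<le> root T ?g" .
  have "root T ?g \<le> root T (sqrt CARD('n) * ?c ^ T)"
    using \<open>T \<ge> 1\<close> bounds(2) by (intro real_root_le_mono) auto
  also have "\<dots> = root T (sqrt CARD('n)) * ?c"
    using \<open>T \<ge> 1\<close> \<open>?c \<ge> 0\<close> by (simp add: real_root_mult real_root_power_cancel)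
  also have "\<dots> \<le> (1 + r) * ?c" using root_sqrt \<open>?c \<ge> 0\<close> by (rule mult_right_mono)
  finally show "root T ?g \<le> (1 + r) * ?c" .
qed

end
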